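(* Let $m,n\ge0$ be integers with $m+n$ even. A permutation $x=(x_1x_2\cdots x_{m+n})$ of $[m+n]$ is an alternating $\mathcal B_{m,n}$-permutation if and only if $x\in\mathrm{Alt}_{\mathrm{Hoch}(m,n)}$.
   Context: For integers $i\le j$, $[i,j]=\{\ell\in\mathbb Z: i\le\ell\le j\}$ and $[N]=[1,N]$. $\mathcal B_{m,n}$ is the collection of nonempty subsets $I\subseteq[m+n]$ such that whenever $|I|\ge2$, $I\cap[m+1,m+n]$ is either $\emptyset$ or $[m+r,m+n]$ for some $1\le r\le n$ (a building set on $[m+n]$). For a building set $\mathcal B$ on $S$ (collection of nonempty subsets of $S$ containing all singletons, closed under unions of intersecting members; its connected components are its inclusion-maximal members; $\mathcal B|_I=\{J\in\mathcal B:J\subseteq I\}$) with $|S|=N$, a $\mathcal B$-permutation is a sequence $(x_1\cdots x_N)$ listing each element of $S$ once such that for each $i$, $x_i$ and $\max\{x_1,\dots,x_i\}$ lie in the same connected component of $\mathcal B|_{\{x_1,\dots,x_i\}}$; it is alternating if $x_1>x_2<x_3>\cdots$. $\mathrm{Alt}_{\mathrm{Hoch}(m,n)}$ is the set of alternating permutations $(x_1\cdots x_{m+n})$ of $[m+n]$ such that for all $i,j$: $m+n\ge x_i>x_j\ge m+1$ implies $i<j$. *)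

theory Defs
  imports Main
begin

definition restrict_bs :: "'a set set \<Rightarrow> 'a set \<Rightarrow> 'a set set" where
  "restrict_bs B I = {J \<in> B. J \<subseteq> I}"

text \<open>Connected components: the inclusion-maximal members.\<close>
definition components_bs :: "'a set set \<Rightarrow> 'a set set" where
  "components_bs B = {C \<in> B. \<forall>D\<in>B. C \<subseteq> D \<longrightarrow> D = C}"

text \<open>B-permutation of the ground set S, written as a list (x_1 ... x_N), 0-indexed.\<close>
definition is_B_perm :: "'a::linorder set set \<Rightarrow> 'a set \<Rightarrow> 'a list \<Rightarrow> bool" where
  "is_B_perm B S xs \<longleftrightarrow> distinct xs \<and> set xs = S \<and>
     (\<forall>i < length xs. \<exists>C \<in> components_bs (restrict_bs B (set (take (Suc i) xs))).
        xs ! i \<in> C \<and> Max (set (take (Suc i) xs)) \<in> C)"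

text \<open>Alternating: x_1 > x_2 < x_3 > ... (0-indexed: even positions descend).\<close>
definition alternating :: "'a::linorder list \<Rightarrow> bool" where
  "alternating xs \<longleftrightarrow> (\<forall>i. Suc i < length xs \<longrightarrow>
     (if even i then xs ! i > xs ! Suc i else xs ! i < xs ! Suc i))"

definition B_mn :: "nat \<Rightarrow> nat \<Rightarrow> nat set set" where
  "B_mn m n = {I. I \<noteq> {} \<and> I \<subseteq> {1..m+n} \<and>
     (card I \<ge> 2 \<longrightarrow> I \<inter> {m+1..m+n} = {} \<or>
        (\<exists>r. 1 \<le> r \<and> r \<le> n \<and> I \<inter> {m+1..m+n} = {m+r..m+n}))}"

definition Alt_Hoch :: "nat \<Rightarrow> nat \<Rightarrow> nat list set" where
  "Alt_Hoch m n = {xs. distinct xs \<and> set xs = {1..m+n} \<and> alternating xs \<and>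
     (\<forall>i < length xs. \<forall>j < length xs.
        m + n \<ge> xs ! i \<and> xs ! i > xs ! j \<and> xs ! j \<ge> m + 1 \<longrightarrow> i < j)}"

end

theory Submission
  imports Defs
begin

text \<open>A member of \<open>B_mn m n\<close> with at least two elements meets \<open>[m+1,m+n]\<close> in a final segment.
Hence, in a prefix \<open>P\<close> with maximum \<open>M\<close>, an entry \<open>x\<close> lies in a common component with \<open>M\<close>
exactly when \<open>x = M\<close>, or \<open>M \<le> m\<close>, or \<open>M = m+n\<close> and either \<open>x \<le> m\<close> or all of \<open>[x,m+n]\<close> has
already appeared.
So in an alternating \<open>B_mn m n\<close>-permutation the first entry above \<open>m\<close> must be \<open>m+n\<close>: otherwise
the next entry is either smaller, violating the condition, or larger, and then alternation puts
a still larger entry, hence one above \<open>m\<close>, right before it. From then on every entry above \<open>m\<close>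
requires all larger ones to precede it, which is the Hochschild ordering; conversely that
ordering makes every prefix satisfy the condition.\<close>

lemma ex_component_containing_iff:
  assumes "finite B"
  shows "(\<exists>C\<in>components_bs B. x \<in> C \<and> y \<in> C) \<longleftrightarrow> (\<exists>I\<in>B. x \<in> I \<and> y \<in> I)"
proof
  assume "\<exists>I\<in>B. x \<in> I \<and> y \<in> I"
  then obtain I where I: "I \<in> B" "x \<in> I" "y \<in> I" by blast
  from finite_has_maximal2[OF assms I(1)] obtain C
    where "C \<in> B" "I \<subseteq> C" "\<forall>D\<in>B. C \<subseteq> D \<longrightarrow> C = D" by blast
  then show "\<exists>C\<in>components_bs B. x \<in> C \<and> y \<in> C"
    using I unfolding components_bs_def by blast
qed (auto simp: components_bs_def)

lemma B_mn_memberI_below: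
  assumes "A \<noteq> {}" "A \<subseteq> {1..m}"
  shows "A \<in> B_mn m n"
  using assms unfolding B_mn_def by auto

lemma B_mn_memberI_tail:
  assumes "A \<noteq> {}" "A \<subseteq> {1..m+n}" "1 \<le> r" "r \<le> n" "A \<inter> {m+1..m+n} = {m+r..m+n}"
  shows "A \<in> B_mn m n"
  using assms unfolding B_mn_def by blast

lemma singleton_in_B_mn: "x \<in> {1..m+n} \<Longrightarrow> {x} \<in> B_mn m n"
  by (simp add: B_mn_def)

definition B_mn_linked :: "nat \<Rightarrow> nat \<Rightarrow> nat set \<Rightarrow> nat \<Rightarrow> bool" where
  "B_mn_linked m n P x \<longleftrightarrow>
     x = Max P \<or> Max P \<le> m \<or> (Max P = m+n \<and> (x \<le> m \<or> {x..m+n} \<subseteq> P))"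

lemma B_mn_upward_closed:
  assumes I: "I \<in> B_mn m n" and ab: "a \<in> I" "b \<in> I" "a \<noteq> b" and "m < a"
  shows "{a..m+n} \<subseteq> I"
proof -
  have sub: "I \<subseteq> {1..m+n}" using I unfolding B_mn_def by blast
  then have "card {a, b} \<le> card I" using ab by (intro card_mono) (auto intro: finite_subset)
  then have "2 \<le> card I" using ab(3) by simp
  then have tail: "I \<inter> {m+1..m+n} = {} \<or> (\<exists>r. I \<inter> {m+1..m+n} = {m+r..m+n})"
    using I unfolding B_mn_def by blast
  have a_tail: "a \<in> I \<inter> {m+1..m+n}" using ab(1) \<open>m < a\<close> sub by auto
  with tail obtain r where r: "I \<inter> {m+1..m+n} = {m+r..m+n}" by blast
  from a_tail have "a \<in> {m+r..m+n}" unfolding r .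
  then have "{a..m+n} \<subseteq> {m+r..m+n}" by auto
  then show ?thesis using r by blast
qed

lemma B_mn_linked_of_member:
  assumes P: "P \<subseteq> {1..m+n}"
    and I: "I \<in> B_mn m n" "I \<subseteq> P" "x \<in> I" "Max P \<in> I"
  shows "B_mn_linked m n P x"
proof (cases "x = Max P \<or> Max P \<le> m")
  case False
  have "Max P \<le> m+n" using I(2,4) P by auto
  moreover have "{Max P..m+n} \<subseteq> I" using B_mn_upward_closed[OF I(1) I(4) I(3)] False by auto
  ultimately have "m+n \<in> P" using I(2) by auto
  then have "m+n \<le> Max P" using finite_subset[OF P] by simp
  with \<open>Max P \<le> m+n\<close> have "Max P = m+n" by simp
  moreover have "{x..m+n} \<subseteq> P" if "m < x"
    using B_mn_upward_closed[OF I(1) I(3) I(4)] that False I(2) by auto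
  ultimately show ?thesis unfolding B_mn_linked_def by (meson not_le)
qed (auto simp: B_mn_linked_def)

lemma B_mn_member_of_linked:
  assumes P: "P \<subseteq> {1..m+n}" and x: "x \<in> P" and linked: "B_mn_linked m n P x"
  shows "\<exists>I\<in>B_mn m n. I \<subseteq> P \<and> x \<in> I \<and> Max P \<in> I"
proof -
  have "finite P" using finite_subset[OF P] by simp
  then have MP: "Max P \<in> P" and xM: "x \<le> Max P" using x Max_in by auto
  consider "x = Max P" | "Max P \<le> m" | "m < Max P" "Max P = m+n" "x \<le> m"
    | "m < x" "Max P = m+n" "{x..m+n} \<subseteq> P"
    using linked unfolding B_mn_linked_def by (metis not_le)
  then show ?thesis
  proof cases
    case 1
    have "{x} \<in> B_mn m n" using x P by (intro singleton_in_B_mn) blast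
    then show ?thesis using 1 x by (intro bexI[of _ "{x}"]) simp_all
  next
    case 2
    then have "{x, Max P} \<subseteq> {1..m}" using x MP P xM by auto
    then have "{x, Max P} \<in> B_mn m n" by (intro B_mn_memberI_below) simp_all
    then show ?thesis using x MP by (intro bexI[of _ "{x, Max P}"]) simp_all
  next
    case 3
    then have "{x, Max P} \<inter> {m+1..m+n} = {m+n..m+n}" by auto
    moreover have "{x, Max P} \<subseteq> {1..m+n}" using x MP P by blast
    moreover have "1 \<le> n" using 3 by simp
    ultimately have "{x, Max P} \<in> B_mn m n" by (intro B_mn_memberI_tail[of _ m n n]) simp_all
    then show ?thesis using x MP by (intro bexI[of _ "{x, Max P}"]) simp_all
  next
    case 4
    have "x \<le> m+n" using x P by auto
    then have "{x..m+n} \<inter> {m+1..m+n} = {m+(x-m)..m+n}" using 4 by auto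
    moreover have "{x..m+n} \<subseteq> {1..m+n}" using 4 by auto
    moreover have "1 \<le> x - m" "x - m \<le> n" using 4 \<open>x \<le> m+n\<close> by auto
    ultimately have "{x..m+n} \<in> B_mn m n"
      by (intro B_mn_memberI_tail[of _ m n "x-m"]) simp_all
    then show ?thesis using 4 \<open>x \<le> m+n\<close> by (intro bexI[of _ "{x..m+n}"]) simp_all
  qed
qed

lemma ex_component_B_mn_iff_linked:
  assumes P: "P \<subseteq> {1..m+n}" and x: "x \<in> P"
  shows "(\<exists>C\<in>components_bs (restrict_bs (B_mn m n) P). x \<in> C \<and> Max P \<in> C)
         \<longleftrightarrow> B_mn_linked m n P x"
proof -
  have "restrict_bs (B_mn m n) P \<subseteq> Pow P" unfolding restrict_bs_def by blast
  then have "finite (restrict_bs (B_mn m n) P)"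
    using finite_subset[OF P] by (simp add: finite_subset)
  then show ?thesis
    using B_mn_linked_of_member[OF P] B_mn_member_of_linked[OF P x]
    by (auto simp: ex_component_containing_iff restrict_bs_def)
qed

lemma is_B_perm_B_mn_iff:
  assumes "set xs = {1..m+n}"
  shows "is_B_perm (B_mn m n) {1..m+n} xs \<longleftrightarrow> distinct xs \<and>
     (\<forall>i < length xs. B_mn_linked m n (set (take (Suc i) xs)) (xs ! i))"
proof -
  have "set (take (Suc i) xs) \<subseteq> {1..m+n}" "xs ! i \<in> set (take (Suc i) xs)"
    if "i < length xs" for i
    using that assms by (auto simp: take_Suc_conv_app_nth dest: in_set_takeD)
  then show ?thesis
    using assms ex_component_B_mn_iff_linked unfolding is_B_perm_def by simp
qed

lemma in_set_take_Suc_iff: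
  "i < length xs \<Longrightarrow> y \<in> set (take (Suc i) xs) \<longleftrightarrow> (\<exists>k\<le>i. xs ! k = y)"
  by (auto simp: in_set_conv_nth less_Suc_eq_le)

lemma alternating_ascent_preceded_by_greater:
  assumes alt: "alternating xs" and i: "Suc i < length xs" and asc: "xs ! i < xs ! Suc i"
  shows "0 < i \<and> xs ! (i - 1) > xs ! i"
proof -
  have "if even i then xs ! i > xs ! Suc i else xs ! i < xs ! Suc i"
    using alt i unfolding alternating_def by blast
  then have "odd i" using asc by (auto split: if_splits)
  then have pos: "0 < i" and "even (i - 1)" by (simp_all add: odd_pos)
  have "Suc (i - 1) < length xs" using i by simp
  then have "if even (i - 1) then xs ! (i - 1) > xs ! Suc (i - 1)
      else xs ! (i - 1) < xs ! Suc (i - 1)"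
    using alt unfolding alternating_def by blast
  then show ?thesis using pos \<open>even (i - 1)\<close> by simp
qed

lemma top_precedes_large_entry:
  assumes dist: "distinct xs" and set_xs: "set xs = {1..m+n}" and alt: "alternating xs"
    and linked: "\<forall>i < length xs. B_mn_linked m n (set (take (Suc i) xs)) (xs ! i)"
    and j: "j < length xs" "m < xs ! j" "xs ! j < m+n"
  shows "\<exists>p<j. xs ! p = m+n"
proof (rule ccontr)
  assume no_top: "\<not> (\<exists>p<j. xs ! p = m+n)"
  define large where "large = (\<lambda>j. j < length xs \<and> m < xs ! j)"
  define j0 where "j0 = (LEAST j. large j)"
  have "large j" using j unfolding large_def by simp
  then have j0: "j0 < length xs" "m < xs ! j0" and "j0 \<le> j"
    using LeastI[of large j] Least_le[of large j] unfolding j0_def large_def by simp_all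
  have below: "xs ! k \<le> m" if "k < j0" for k
  proof -
    have "\<not> (k < length xs \<and> m < xs ! k)"
      using not_less_Least[of k large] that unfolding j0_def large_def by blast
    then show ?thesis using that j0(1) by simp
  qed
  have j0_top: "xs ! j0 \<noteq> m+n" using no_top \<open>j0 \<le> j\<close> j(3) by (cases "j0 = j") auto
  have "m+n \<in> set xs" using set_xs j by auto
  then obtain p where p: "p < length xs" "xs ! p = m+n" by (metis in_set_conv_nth)
  have "p \<noteq> j0" using p(2) j0_top by blast
  moreover have "\<not> p < j0" using below[of p] p(2) j(2,3) by linarith
  ultimately have j1: "Suc j0 < length xs" using p(1) by simp
  have "xs ! Suc j0 \<noteq> xs ! j0" using dist j1 by (simp add: nth_eq_iff_index_eq)
  moreover have "\<not> xs ! Suc j0 < xs ! j0"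
  proof
    assume desc: "xs ! Suc j0 < xs ! j0"
    let ?P = "set (take (Suc (Suc j0)) xs)"
    have "Max ?P = xs ! j0"
    proof (rule Max_eqI)
      show "finite ?P" by simp
      show "xs ! j0 \<in> ?P" by (subst in_set_take_Suc_iff[OF j1]) (auto intro: le_SucI)
      fix y assume "y \<in> ?P"
      then obtain k where "k \<le> Suc j0" "xs ! k = y" using in_set_take_Suc_iff[OF j1] by blast
      then show "y \<le> xs ! j0"
        using below[of k] desc j0(2) by (cases "k < j0") (auto simp: le_Suc_eq)
    qed
    moreover have "B_mn_linked m n ?P (xs ! Suc j0)" using linked j1 by blast
    ultimately show False using desc j0(2) j0_top unfolding B_mn_linked_def by auto
  qed
  ultimately have "xs ! j0 < xs ! Suc j0" by simp
  then have "0 < j0" "xs ! (j0 - 1) > xs ! j0"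
    using alternating_ascent_preceded_by_greater[OF alt j1] by auto
  then show False using below[of "j0 - 1"] j0(2) by simp
qed

lemma Max_set_take_eq_top:
  assumes "set xs = {1..m+n}" "m+n \<in> set (take i xs)"
  shows "Max (set (take i xs)) = m+n"
proof (rule Max_eqI)
  show "y \<le> m+n" if "y \<in> set (take i xs)" for y
    using that set_take_subset[of i xs] assms(1) by auto
qed (use assms(2) in simp_all)

lemma Hoch_order_of_B_mn_linked:
  assumes dist: "distinct xs" and set_xs: "set xs = {1..m+n}" and alt: "alternating xs"
    and linked: "\<forall>i < length xs. B_mn_linked m n (set (take (Suc i) xs)) (xs ! i)"
    and i: "i < length xs" and j: "j < length xs"
    and vals: "xs ! i \<le> m+n" "xs ! j < xs ! i" "m+1 \<le> xs ! j"
  shows "i < j"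
proof (rule ccontr)
  assume "\<not> i < j"
  then have ji: "j < i" using vals by (cases "i = j") auto
  let ?P = "set (take (Suc j) xs)"
  have "m < xs ! j" "xs ! j < m+n" using vals by auto
  then obtain p where "p < j" "xs ! p = m+n"
    using top_precedes_large_entry[OF dist set_xs alt linked j] by blast
  then have "m+n \<in> ?P" unfolding in_set_take_Suc_iff[OF j] using less_imp_le by blast
  then have "Max ?P = m+n" using set_xs by (rule Max_set_take_eq_top[rotated])
  moreover have "B_mn_linked m n ?P (xs ! j)" using linked j by blast
  ultimately have "{xs ! j..m+n} \<subseteq> ?P" using vals unfolding B_mn_linked_def by auto
  then have "xs ! i \<in> ?P" using vals by auto
  then obtain k where "k \<le> j" "xs ! k = xs ! i" unfolding in_set_take_Suc_iff[OF j] by blast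
  then show False using dist i j ji by (simp add: nth_eq_iff_index_eq)
qed

lemma B_mn_linked_of_Hoch_order:
  assumes dist: "distinct xs" and set_xs: "set xs = {1..m+n}"
    and hoch: "\<And>i j. i < length xs \<Longrightarrow> j < length xs \<Longrightarrow>
        xs ! i \<le> m+n \<Longrightarrow> xs ! j < xs ! i \<Longrightarrow> m+1 \<le> xs ! j \<Longrightarrow> i < j"
    and i: "i < length xs"
  shows "B_mn_linked m n (set (take (Suc i) xs)) (xs ! i)"
proof -
  let ?P = "set (take (Suc i) xs)"
  have "xs ! i \<in> ?P" by (subst in_set_take_Suc_iff[OF i]) blast
  then have "Max ?P \<in> ?P" by (intro Max_in) auto
  then obtain k where k: "k \<le> i" "xs ! k = Max ?P" unfolding in_set_take_Suc_iff[OF i] by blast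
  have "Max ?P \<le> m+n" using \<open>Max ?P \<in> ?P\<close> set_take_subset[of "Suc i" xs] set_xs by auto
  have top: "Max ?P = m+n" if large: "m < Max ?P"
  proof (rule ccontr)
    assume "Max ?P \<noteq> m+n"
    with \<open>Max ?P \<le> m+n\<close> have lt: "Max ?P < m+n" by simp
    have "m+n \<in> set xs" using set_xs lt by auto
    then obtain p where p: "p < length xs" "xs ! p = m+n" by (metis in_set_conv_nth)
    have "k < length xs" using k i by simp
    then have "p < k" using hoch[OF p(1)] p(2) k(2) lt large by simp
    then have "m+n \<in> ?P"
      unfolding in_set_take_Suc_iff[OF i] using k(1) p(2) by (intro exI[of _ p]) simp
    then have "m+n \<le> Max ?P" by (intro Max_ge) simp_all
    with lt show False by simp
  qed
  have tail: "{xs ! i..m+n} \<subseteq> ?P" if "m < xs ! i"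
  proof
    fix y assume y: "y \<in> {xs ! i..m+n}"
    have "xs ! i \<in> set xs" using i by simp
    then have "y \<in> set xs" using y set_xs by auto
    then obtain q where q: "q < length xs" "xs ! q = y" by (metis in_set_conv_nth)
    show "y \<in> ?P"
    proof (cases "q \<le> i")
      case True
      then show ?thesis unfolding in_set_take_Suc_iff[OF i] using q(2) by blast
    next
      case False
      then have "xs ! q \<noteq> xs ! i" using dist q(1) i by (simp add: nth_eq_iff_index_eq)
      then have "xs ! i < xs ! q" using q(2) y by simp
      then have "q < i" using hoch[OF q(1) i] q(2) y that by simp
      then show ?thesis using False by simp
    qed
  qed
  show ?thesis unfolding B_mn_linked_def using top tail not_le by blast
qed

theorem proposition6p1:
  fixes m n :: nat and xs :: "nat list"
  assumes "even (m + n)"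
    and "distinct xs" and "set xs = {1..m+n}"
  shows "(alternating xs \<and> is_B_perm (B_mn m n) {1..m+n} xs) \<longleftrightarrow> xs \<in> Alt_Hoch m n"
proof -
  let ?linked = "\<forall>i < length xs. B_mn_linked m n (set (take (Suc i) xs)) (xs ! i)"
  let ?hoch = "\<forall>i < length xs. \<forall>j < length xs.
      m+n \<ge> xs ! i \<and> xs ! i > xs ! j \<and> xs ! j \<ge> m+1 \<longrightarrow> i < j"
  have B_perm: "is_B_perm (B_mn m n) {1..m+n} xs \<longleftrightarrow> ?linked"
    using assms(2,3) is_B_perm_B_mn_iff by simp
  have Hoch: "xs \<in> Alt_Hoch m n \<longleftrightarrow> alternating xs \<and> ?hoch"
    using assms(2,3) by (simp add: Alt_Hoch_def)
  have "?hoch" if "alternating xs" ?linked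
    using Hoch_order_of_B_mn_linked[OF assms(2,3) that] by blast
  moreover have ?linked if ?hoch
    using B_mn_linked_of_Hoch_order[OF assms(2,3)] that by blast
  ultimately show ?thesis unfolding B_perm Hoch by blast
qed

end
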